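(* Let $(X,d)$ be a metric space and $\mu$ a non-atomic Borel measure on $X$. For every path $\gamma:[a,b]\to X$ in $\Gamma^\mu$ there is a unique map $\gamma_h:[0,h(\gamma)]\to X$ such that $\gamma=\gamma_h\circ\nu_\gamma$; moreover $\mathrm{Im}(\gamma)=\mathrm{Im}(\gamma_h)$ and $\nu_{\gamma_h}(t)=t$ for all $t\in[0,h(\gamma)]$ (so $\gamma_h=\gamma_h\circ\nu_{\gamma_h}$).
   Context: A path is a continuous map $\gamma:[a,b]\to X$; a subpath is a restriction to a subinterval, trivial if that interval is a point; $\mathrm{Im}(\gamma)=\gamma([a,b])$. $\mu$ non-atomic: $\mu(\{x\})=0$ for all $x\in X$. $\Gamma^\mu$ is the set of all non-trivial injective paths $\gamma$ in $X$ with $0<\mu(\mathrm{Im}(\tilde\gamma))<\infty$ for every non-trivial subpath $\tilde\gamma$ of $\gamma$. For $\gamma\in\Gamma^\mu$, $h(\gamma)=\mu(\mathrm{Im}(\gamma))$, and the $\mu$-arc length of $\gamma:[a,b]\to X$ is $\nu_\gamma:[a,b]\to\mathbb R$, $\nu_\gamma(x)=\mu(\gamma([a,x]))$. The map $\gamma_h$ is called the $\mu$-arc length parametrization of $\gamma$. *)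

theory Defs
  imports "HOL-Analysis.Analysis"
begin

text \<open>A path is a continuous map on a compact interval [a,b]; here represented by
  a function real => 'a together with the endpoints a and b.\<close>

definition nonatomic :: "'a measure \<Rightarrow> bool" where
  "nonatomic M \<longleftrightarrow> (\<forall>x. emeasure M {x} = 0)"

definition in_Gamma :: "'a::metric_space measure \<Rightarrow> real \<Rightarrow> real \<Rightarrow> (real \<Rightarrow> 'a) \<Rightarrow> bool" where
  "in_Gamma M a b \<gamma> \<longleftrightarrow>
     a < b \<and> continuous_on {a..b} \<gamma> \<and> inj_on \<gamma> {a..b} \<and>
     (\<forall>c d. a \<le> c \<longrightarrow> c < d \<longrightarrow> d \<le> b \<longrightarrow>
        0 < emeasure M (\<gamma> ` {c..d}) \<and> emeasure M (\<gamma> ` {c..d}) < \<infinity>)"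

definition hlen :: "'a measure \<Rightarrow> real \<Rightarrow> real \<Rightarrow> (real \<Rightarrow> 'a) \<Rightarrow> real" where
  "hlen M a b \<gamma> = measure M (\<gamma> ` {a..b})"

definition arclen :: "'a measure \<Rightarrow> real \<Rightarrow> (real \<Rightarrow> 'a) \<Rightarrow> real \<Rightarrow> real" where
  "arclen M a \<gamma> x = measure M (\<gamma> ` {a..x})"

end

theory Submission
  imports Defs
begin

text \<open>Since \<gamma> is injective, consecutive pieces \<gamma>[a,x] and \<gamma>[x,y] meet only in the
  null set {\<gamma> x}, so the arc length \<nu> is additive; positivity of \<mu> on subpaths makes it
  strictly increasing, and non-atomicity together with continuity of \<mu> from above makes it
  continuous. Hence \<nu> is a bijection of [a,b] onto [0,h(\<gamma>)], and \<gamma> composed with its inverse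
  is the unique factorisation. Its own arc length is the identity because it maps [0,\<nu>(x)]
  onto \<gamma>[a,x].\<close>

lemma nonatomic_measure_singleton: "nonatomic M \<Longrightarrow> measure M {x} = 0"
  by (simp add: nonatomic_def measure_def)

lemma sets_borel_continuous_image_compact:
  fixes f :: "'a::topological_space \<Rightarrow> 'b::t2_space"
  assumes "sets M = sets borel" "compact K" "continuous_on K f"
  shows "f ` K \<in> sets M"
proof -
  have "closed (f ` K)"
    using assms(2,3) by (intro compact_imp_closed compact_continuous_image)
  then show ?thesis
    using assms(1) by simp
qed

lemma Inter_shrinking_cball: "(\<Inter>n. cball (x::real) (1 / Suc n)) = {x}"
proof (intro subset_antisym subsetI)
  fix y assume y: "y \<in> (\<Inter>n. cball x (1 / Suc n))"
  have "dist x y \<le> 0"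
  proof (rule ccontr)
    assume "\<not> dist x y \<le> 0"
    then obtain n where "inverse (real (Suc n)) < dist x y"
      using reals_Archimedean[of "dist x y"] by auto
    moreover have "dist x y \<le> 1 / Suc n"
      using y by simp
    ultimately show False by (simp add: inverse_eq_divide del: of_nat_Suc)
  qed
  then show "y \<in> {x}" by simp
qed auto

locale Gamma_path =
  fixes M :: "'a::metric_space measure" and \<gamma> :: "real \<Rightarrow> 'a" and a b :: real
  assumes sets_M: "sets M = sets borel"
    and nonatomic: "nonatomic M"
    and in_Gamma: "in_Gamma M a b \<gamma>"
begin

abbreviation \<nu> :: "real \<Rightarrow> real" where "\<nu> \<equiv> arclen M a \<gamma>"

lemma a_less_b: "a < b"
  and continuous: "continuous_on {a..b} \<gamma>"
  and inj: "inj_on \<gamma> {a..b}"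
  and emeasure_subpath_pos: "\<And>c d. a \<le> c \<Longrightarrow> c < d \<Longrightarrow> d \<le> b \<Longrightarrow> 0 < emeasure M (\<gamma> ` {c..d})"
  and emeasure_subpath_finite: "\<And>c d. a \<le> c \<Longrightarrow> c < d \<Longrightarrow> d \<le> b \<Longrightarrow> emeasure M (\<gamma> ` {c..d}) < \<infinity>"
  using in_Gamma by (auto simp: in_Gamma_def)

lemma image_compact_fmeasurable:
  assumes "compact K" "K \<subseteq> {a..b}"
  shows "\<gamma> ` K \<in> fmeasurable M"
proof -
  have sets: "\<gamma> ` K' \<in> sets M" if "compact K'" "K' \<subseteq> {a..b}" for K'
    using sets_borel_continuous_image_compact[OF sets_M that(1)]
      continuous_on_subset[OF continuous that(2)] by blast
  have "emeasure M (\<gamma> ` K) \<le> emeasure M (\<gamma> ` {a..b})"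
    using assms by (intro emeasure_mono image_mono sets) auto
  also have "\<dots> < \<infinity>"
    using emeasure_subpath_finite a_less_b by auto
  finally show ?thesis
    using sets[OF assms] by (auto simp: fmeasurable_def)
qed

lemma arclen_a: "\<nu> a = 0"
  using nonatomic_measure_singleton[OF nonatomic] by (simp add: arclen_def)

lemma arclen_add:
  assumes "a \<le> x" "x \<le> y" "y \<le> b"
  shows "\<nu> y = \<nu> x + measure M (\<gamma> ` {x..y})"
proof -
  have "\<gamma> ` {a..y} = \<gamma> ` {a..x} \<union> \<gamma> ` {x..y}"
    using assms by (metis image_Un ivl_disj_un_two_touch(4))
  moreover have "\<gamma> ` {a..x} \<inter> \<gamma> ` {x..y} = {\<gamma> x}"
    using assms inj_onD[OF inj] by (fastforce simp: image_iff)
  ultimately show ?thesis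
    unfolding arclen_def
    using measure_Un3[OF image_compact_fmeasurable image_compact_fmeasurable, of "{a..x}" "{x..y}"]
      assms nonatomic_measure_singleton[OF nonatomic]
    by auto
qed

lemma arclen_dist:
  assumes "x \<in> {a..b}" "y \<in> {a..b}"
  shows "dist (\<nu> y) (\<nu> x) = measure M (\<gamma> ` closed_segment x y)"
  using assms arclen_add[of x y] arclen_add[of y x]
  by (cases "x \<le> y") (auto simp: dist_real_def closed_segment_eq_real_ivl)

lemma arclen_strict_mono: "strict_mono_on {a..b} \<nu>"
proof (rule strict_mono_onI)
  fix x y assume "x \<in> {a..b}" "y \<in> {a..b}" "x < y"
  then have "0 < measure M (\<gamma> ` {x..y})"
    using emeasure_subpath_pos[of x y] emeasure_subpath_finite[of x y]
    by (simp add: measure_def enn2real_positive_iff)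
  with \<open>x \<in> {a..b}\<close> \<open>y \<in> {a..b}\<close> \<open>x < y\<close> show "\<nu> x < \<nu> y"
    using arclen_add[of x y] by auto
qed

lemma measure_image_shrinking_tendsto_0:
  assumes "x \<in> {a..b}"
  shows "(\<lambda>n. measure M (\<gamma> ` ({a..b} \<inter> cball x (1 / Suc n)))) \<longlonglongrightarrow> 0"
proof -
  define S where "S n = {a..b} \<inter> cball x (1 / Suc n)" for n :: nat
  have dec: "decseq (\<lambda>n. \<gamma> ` S n)"
    unfolding S_def by (intro decseq_SucI image_mono Int_mono subset_cball order.refl) (simp add: frac_le)
  have fmeas: "\<gamma> ` S n \<in> fmeasurable M" for n
    by (intro image_compact_fmeasurable) (auto simp: S_def compact_Int_closed)
  have "(\<Inter>n. \<gamma> ` S n) = \<gamma> ` (\<Inter>n. S n)"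
    by (rule image_INT[symmetric, OF inj]) (auto simp: S_def)
  also have "(\<Inter>n. S n) = {x}"
    using assms Inter_shrinking_cball[of x] by (auto simp: S_def)
  finally have Inter: "(\<Inter>n. \<gamma> ` S n) = {\<gamma> x}" by simp
  have "(\<lambda>n. measure M (\<gamma> ` S n)) \<longlonglongrightarrow> measure M (\<Inter>n. \<gamma> ` S n)"
    using fmeas by (intro Lim_measure_decseq dec) (auto simp: fmeasurable_def less_top[symmetric])
  then show ?thesis
    unfolding Inter nonatomic_measure_singleton[OF nonatomic] by (simp add: S_def)
qed

lemma continuous_on_arclen: "continuous_on {a..b} \<nu>"
  unfolding continuous_on_iff
proof (intro ballI allI impI)
  fix x e :: real assume x: "x \<in> {a..b}" and "0 < e"
  define S where "S n = {a..b} \<inter> cball x (1 / Suc n)" for n :: nat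
  obtain n where n: "measure M (\<gamma> ` S n) < e"
    using measure_image_shrinking_tendsto_0[OF x] \<open>0 < e\<close>
    unfolding S_def by (auto dest!: LIMSEQ_D)
  show "\<exists>d>0. \<forall>y\<in>{a..b}. dist y x < d \<longrightarrow> dist (\<nu> y) (\<nu> x) < e"
  proof (intro exI[of _ "1 / Suc n"] conjI ballI impI)
    fix y assume y: "y \<in> {a..b}" "dist y x < 1 / Suc n"
    have "closed_segment x y \<subseteq> S n"
      using x y by (auto simp: S_def dist_real_def closed_segment_eq_real_ivl split: if_splits)
    then have "measure M (\<gamma> ` closed_segment x y) \<le> measure M (\<gamma> ` S n)"
      using x y
      by (intro measure_mono_fmeasurable image_mono fmeasurableD image_compact_fmeasurable)
         (auto simp: S_def closed_segment_eq_real_ivl compact_Int_closed)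
    with n show "dist (\<nu> y) (\<nu> x) < e"
      using arclen_dist[OF x y(1)] by simp
  qed simp
qed

lemma arclen_image:
  assumes "x \<in> {a..b}"
  shows "\<nu> ` {a..x} = {0..\<nu> x}"
proof
  show "\<nu> ` {a..x} \<subseteq> {0..\<nu> x}"
    using assms arclen_a strict_mono_on_leD[OF arclen_strict_mono] by force
  show "{0..\<nu> x} \<subseteq> \<nu> ` {a..x}"
  proof
    fix t assume t: "t \<in> {0..\<nu> x}"
    have "continuous_on {a..x} \<nu>"
      using assms by (intro continuous_on_subset[OF continuous_on_arclen]) auto
    then show "t \<in> \<nu> ` {a..x}"
      using IVT'[of \<nu> a t x] t arclen_a assms by force
  qed
qed

lemma hlen_eq_arclen: "hlen M a b \<gamma> = \<nu> b"
  by (simp add: hlen_def arclen_def)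

definition reparam :: "real \<Rightarrow> 'a" where
  "reparam t = \<gamma> (the_inv_into {a..b} \<nu> t)"

lemma reparam_arclen: "x \<in> {a..b} \<Longrightarrow> reparam (\<nu> x) = \<gamma> x"
  unfolding reparam_def
  using the_inv_into_f_f[OF strict_mono_on_imp_inj_on[OF arclen_strict_mono]] by simp

lemma reparam_image: "x \<in> {a..b} \<Longrightarrow> reparam ` {0..\<nu> x} = \<gamma> ` {a..x}"
  unfolding arclen_image[symmetric] image_image
  by (intro image_cong refl reparam_arclen) auto

lemma arclen_reparam:
  assumes "t \<in> {0..hlen M a b \<gamma>}"
  shows "arclen M 0 reparam t = t"
proof -
  have "t \<in> \<nu> ` {a..b}"
    using assms arclen_image[of b] a_less_b by (simp add: hlen_eq_arclen)
  then obtain x where x: "x \<in> {a..b}" "t = \<nu> x"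
    by blast
  then show ?thesis
    using reparam_image[OF x(1)] by (simp add: arclen_def)
qed

end

theorem theorem2p2:
  fixes M :: "'a::metric_space measure" and \<gamma> :: "real \<Rightarrow> 'a" and a b :: real
  assumes borel: "sets M = sets borel"
    and nonat: "nonatomic M"
    and G: "in_Gamma M a b \<gamma>"
  shows "\<exists>g. (\<forall>x\<in>{a..b}. \<gamma> x = g (arclen M a \<gamma> x))
            \<and> (\<forall>g'. (\<forall>x\<in>{a..b}. \<gamma> x = g' (arclen M a \<gamma> x)) \<longrightarrow>
                    (\<forall>t\<in>{0..hlen M a b \<gamma>}. g' t = g t))
            \<and> \<gamma> ` {a..b} = g ` {0..hlen M a b \<gamma>}
            \<and> (\<forall>t\<in>{0..hlen M a b \<gamma>}. arclen M 0 g t = t)"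
proof -
  interpret Gamma_path M \<gamma> a b
    using assms by unfold_locales
  have arclen_onto: "arclen M a \<gamma> ` {a..b} = {0..hlen M a b \<gamma>}"
    using arclen_image[of b] a_less_b by (simp add: hlen_eq_arclen)
  have unique: "g' t = reparam t"
    if "\<forall>x\<in>{a..b}. \<gamma> x = g' (arclen M a \<gamma> x)" "t \<in> {0..hlen M a b \<gamma>}" for g' t
    using that arclen_onto reparam_arclen by (metis imageE)
  show ?thesis
    using reparam_arclen unique reparam_image[of b] arclen_reparam a_less_b
    by (intro exI[of _ reparam]) (auto simp: hlen_eq_arclen)
qed

end
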